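(* Let $n\ge2$, let $P=(p_{kl})$ be an $n\times n$ checkerboard copula, and let $i,j,i',j'\in\{1,\dots,n-1\}$ with $\eta_{i'j'}\neq0$, where $\eta_{ab}=p_{ab}+p_{a+1,b}+p_{a,b+1}+p_{a+1,b+1}$. For $\epsilon\in\mathbb{R}$ put $$\tilde P=P+\epsilon\Big(T^{ij}-\frac{\eta_{ij}}{\eta_{i'j'}}T^{i'j'}\Big).$$ Then $1-\mathrm{tr}(\Xi P\Xi P^\top)=1-\mathrm{tr}(\Xi\tilde P\Xi\tilde P^\top)+O(\epsilon^2)$ as $\epsilon\to0$.
   Context: An $n\times n$ checkerboard copula is a real $n\times n$ matrix with nonnegative entries whose row and column sums all equal $\frac1n$. $\Xi=(\xi_{kl})$ with $\xi_{kl}=1$ if $k=l$, $2$ if $k>l$, $0$ if $k<l$. For $a,b\in\{1,\dots,n-1\}$, $T^{ab}=\mathbf{e}_a\mathbf{e}_b^\top+\mathbf{e}_{a+1}\mathbf{e}_{b+1}^\top-\mathbf{e}_a\mathbf{e}_{b+1}^\top-\mathbf{e}_{a+1}\mathbf{e}_b^\top$, where $\mathbf{e}_k$ is the $k$-th standard unit column vector of $\mathbb{R}^n$. *)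

theory Defs
  imports Complex_Main "HOL-Library.Landau_Symbols"
begin

(* n x n matrices are represented as functions nat => nat => real, indices 1..n *)

definition checkerboard_copula :: "nat \<Rightarrow> (nat \<Rightarrow> nat \<Rightarrow> real) \<Rightarrow> bool" where
  "checkerboard_copula n P \<longleftrightarrow>
     (\<forall>k\<in>{1..n}. \<forall>l\<in>{1..n}. P k l \<ge> 0) \<and>
     (\<forall>k\<in>{1..n}. (\<Sum>l=1..n. P k l) = 1 / real n) \<and>
     (\<forall>l\<in>{1..n}. (\<Sum>k=1..n. P k l) = 1 / real n)"

definition Xi :: "nat \<Rightarrow> nat \<Rightarrow> real" where
  "Xi k l = (if k = l then 1 else if k > l then 2 else 0)"

definition Tmat :: "nat \<Rightarrow> nat \<Rightarrow> nat \<Rightarrow> nat \<Rightarrow> real" where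
  "Tmat a b k l =
     (if k = a \<and> l = b then 1 else 0) + (if k = a + 1 \<and> l = b + 1 then 1 else 0)
     - (if k = a \<and> l = b + 1 then 1 else 0) - (if k = a + 1 \<and> l = b then 1 else 0)"

definition eta :: "(nat \<Rightarrow> nat \<Rightarrow> real) \<Rightarrow> nat \<Rightarrow> nat \<Rightarrow> real" where
  "eta P a b = P a b + P (a + 1) b + P a (b + 1) + P (a + 1) (b + 1)"

definition trXiPXiPt :: "nat \<Rightarrow> (nat \<Rightarrow> nat \<Rightarrow> real) \<Rightarrow> real" where
  "trXiPXiPt n P = (\<Sum>k=1..n. \<Sum>l=1..n. \<Sum>m=1..n. \<Sum>r=1..n.
       Xi k l * P l m * Xi m r * P k r)"

end

theory Submission
  imports Defs
begin

(* P \<mapsto> tr(\<Xi> P \<Xi> P^T) is a quadratic form, so the perturbation changes it by \<epsilon> times its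
   polar bilinear form at (P, T^{ij} - (\<eta>_{ij} / \<eta>_{i'j'}) T^{i'j'}), up to O(\<epsilon>^2).
   Since T^{ab} = (e_a - e_{a+1}) (e_b - e_{b+1})^T and consecutive rows (columns) of \<Xi> differ by
   -(e_a + e_{a+1}) (resp. e_b + e_{b+1}), that bilinear form at (P, T^{ab}) equals -2 \<eta>_{ab}, and the
   chosen combination makes the linear term vanish. *)

definition trXiAXiBt :: "nat \<Rightarrow> (nat \<Rightarrow> nat \<Rightarrow> real) \<Rightarrow> (nat \<Rightarrow> nat \<Rightarrow> real) \<Rightarrow> real" where
  "trXiAXiBt n A B = (\<Sum>k=1..n. \<Sum>l=1..n. \<Sum>m=1..n. \<Sum>r=1..n.
       Xi k l * A l m * Xi m r * B k r)"

lemma trXiPXiPt_eq_trXiAXiBt: "trXiPXiPt n P = trXiAXiBt n P P"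
  unfolding trXiPXiPt_def trXiAXiBt_def ..

lemma trXiAXiBt_linear_left:
  "trXiAXiBt n (\<lambda>k l. A k l + c * C k l) B = trXiAXiBt n A B + c * trXiAXiBt n C B"
  unfolding trXiAXiBt_def by (simp add: algebra_simps sum.distrib sum_distrib_left)

lemma trXiAXiBt_linear_right:
  "trXiAXiBt n A (\<lambda>k l. B k l + c * C k l) = trXiAXiBt n A B + c * trXiAXiBt n A C"
  unfolding trXiAXiBt_def by (simp add: algebra_simps sum.distrib sum_distrib_left)

lemma trXiPXiPt_perturb:
  "trXiPXiPt n (\<lambda>k l. P k l + e * D k l)
     = trXiPXiPt n P + e * (trXiAXiBt n P D + trXiAXiBt n D P) + e\<^sup>2 * trXiPXiPt n D"
  unfolding trXiPXiPt_eq_trXiAXiBt trXiAXiBt_linear_left trXiAXiBt_linear_right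
  by (simp add: algebra_simps power2_eq_square)

lemma trXiAXiBt_eq_right:
  "trXiAXiBt n A B = (\<Sum>k=1..n. \<Sum>r=1..n. B k r * (\<Sum>l=1..n. \<Sum>m=1..n. Xi k l * A l m * Xi m r))"
  unfolding trXiAXiBt_def sum_distrib_left
  by (subst (2) sum.swap, subst (3) sum.swap) (simp add: mult_ac)

lemma trXiAXiBt_eq_left:
  "trXiAXiBt n A B = (\<Sum>l=1..n. \<Sum>m=1..n. A l m * (\<Sum>k=1..n. \<Sum>r=1..n. Xi k l * B k r * Xi m r))"
  unfolding trXiAXiBt_def sum_distrib_left
  by (subst sum.swap, subst (2) sum.swap) (simp add: mult_ac)

definition unit_diff :: "nat \<Rightarrow> nat \<Rightarrow> real" where
  "unit_diff a k = of_bool (k = a) - of_bool (k = a + 1)"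

definition unit_pair :: "nat \<Rightarrow> nat \<Rightarrow> real" where
  "unit_pair a k = of_bool (k = a) + of_bool (k = a + 1)"

lemma Tmat_eq_unit_diff: "Tmat a b k l = unit_diff a k * unit_diff b l"
  unfolding Tmat_def unit_diff_def by auto

lemma sum_unit_diff_mult:
  assumes "1 \<le> a" "a < n"
  shows "(\<Sum>k=1..n. unit_diff a k * f k) = f a - f (a + 1)"
  using assms by (simp add: unit_diff_def left_diff_distrib sum_subtractf)

lemma sum_unit_pair_mult:
  assumes "1 \<le> a" "a < n"
  shows "(\<Sum>k=1..n. unit_pair a k * f k) = f a + f (a + 1)"
  using assms by (simp add: unit_pair_def distrib_right sum.distrib)

lemma Xi_row_diff: "Xi a l - Xi (a + 1) l = - unit_pair a l"
  unfolding Xi_def unit_pair_def by auto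

lemma Xi_col_diff: "Xi m b - Xi m (b + 1) = unit_pair b m"
  unfolding Xi_def unit_pair_def by auto

lemma eta_eq_sum_unit_pair:
  assumes "1 \<le> a" "a < n" "1 \<le> b" "b < n"
  shows "eta P a b = (\<Sum>k=1..n. \<Sum>r=1..n. P k r * (unit_pair a k * unit_pair b r))"
proof -
  have "(\<Sum>k=1..n. \<Sum>r=1..n. P k r * (unit_pair a k * unit_pair b r))
      = (\<Sum>k=1..n. unit_pair a k * (\<Sum>r=1..n. unit_pair b r * P k r))"
    by (simp add: sum_distrib_left mult_ac)
  also have "\<dots> = eta P a b"
    unfolding sum_unit_pair_mult[OF assms(3,4)] sum_unit_pair_mult[OF assms(1,2)] eta_def
    by (simp add: algebra_simps)
  finally show ?thesis by simp
qed

lemma trXiAXiBt_Tmat_right: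
  assumes "1 \<le> a" "a < n" "1 \<le> b" "b < n"
  shows "trXiAXiBt n P (Tmat a b) = - eta P a b"
proof -
  have "trXiAXiBt n P (Tmat a b)
      = (\<Sum>l=1..n. \<Sum>m=1..n. P l m *
           ((\<Sum>k=1..n. unit_diff a k * Xi k l) * (\<Sum>r=1..n. unit_diff b r * Xi m r)))"
    unfolding trXiAXiBt_eq_left Tmat_eq_unit_diff sum_product by (simp add: mult_ac)
  also have "\<dots> = (\<Sum>l=1..n. \<Sum>m=1..n. P l m * (- unit_pair a l * unit_pair b m))"
    unfolding sum_unit_diff_mult[OF assms(1,2)] sum_unit_diff_mult[OF assms(3,4)]
      Xi_row_diff Xi_col_diff ..
  finally show ?thesis
    using eta_eq_sum_unit_pair[OF assms] by (simp add: sum_negf)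
qed

lemma trXiAXiBt_Tmat_left:
  assumes "1 \<le> a" "a < n" "1 \<le> b" "b < n"
  shows "trXiAXiBt n (Tmat a b) P = - eta P a b"
proof -
  have "trXiAXiBt n (Tmat a b) P
      = (\<Sum>k=1..n. \<Sum>r=1..n. P k r *
           ((\<Sum>l=1..n. unit_diff a l * Xi k l) * (\<Sum>m=1..n. unit_diff b m * Xi m r)))"
    unfolding trXiAXiBt_eq_right Tmat_eq_unit_diff sum_product by (simp add: mult_ac)
  also have "\<dots> = (\<Sum>k=1..n. \<Sum>r=1..n. P k r * (unit_pair a k * - unit_pair b r))"
    unfolding sum_unit_diff_mult[OF assms(1,2)] sum_unit_diff_mult[OF assms(3,4)]
      Xi_row_diff Xi_col_diff ..
  finally show ?thesis
    using eta_eq_sum_unit_pair[OF assms] by (simp add: sum_negf)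
qed

theorem lemma3:
  fixes n :: nat and P :: "nat \<Rightarrow> nat \<Rightarrow> real" and i j i' j' :: nat
  assumes "n \<ge> 2"
    and "checkerboard_copula n P"
    and "i \<in> {1..n-1}" and "j \<in> {1..n-1}" and "i' \<in> {1..n-1}" and "j' \<in> {1..n-1}"
    and "eta P i' j' \<noteq> 0"
  shows "(\<lambda>\<epsilon>::real. (1 - trXiPXiPt n P)
            - (1 - trXiPXiPt n (\<lambda>k l. P k l + \<epsilon> * (Tmat i j k l
                 - eta P i j / eta P i' j' * Tmat i' j' k l))))
         \<in> O[at 0](\<lambda>\<epsilon>. \<epsilon>^2)"
proof -
  define c where "c = eta P i j / eta P i' j'"
  define D where "D = (\<lambda>k l. Tmat i j k l + (- c) * Tmat i' j' k l)"
  have ij: "1 \<le> i" "i < n" "1 \<le> j" "j < n" and ij': "1 \<le> i'" "i' < n" "1 \<le> j'" "j' < n"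
    using assms(3-6) by auto
  have first_order_vanishes: "trXiAXiBt n P D + trXiAXiBt n D P = 0"
    unfolding D_def trXiAXiBt_linear_left trXiAXiBt_linear_right
      trXiAXiBt_Tmat_left[OF ij] trXiAXiBt_Tmat_right[OF ij]
      trXiAXiBt_Tmat_left[OF ij'] trXiAXiBt_Tmat_right[OF ij']
    using assms(7) by (simp add: c_def)
  have "(\<lambda>\<epsilon>::real. (1 - trXiPXiPt n P)
            - (1 - trXiPXiPt n (\<lambda>k l. P k l + \<epsilon> * (Tmat i j k l
                 - eta P i j / eta P i' j' * Tmat i' j' k l))))
       = (\<lambda>\<epsilon>. trXiPXiPt n D * \<epsilon>^2)"
    using trXiPXiPt_perturb[of n P _ D] first_order_vanishes by (simp add: D_def c_def mult.commute)
  then show ?thesis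
    by (simp add: bigoI[where c="\<bar>trXiPXiPt n D\<bar>"] abs_mult)
qed

end
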